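(* Let $m\ge2$, let $n\ge2$ be even, and $\epsilon\in\mathbb R$. Consider $2n$ parties on a ring (indices mod $2n$), each party $j$ holding values $M^{(j)}_0,\dots,M^{(j)}_{m-1}\in\{\pm1\}$. Define $$I^{(2n)}_{\mathrm{chain}}(\epsilon):=\sum_{j=0}^{2n-1}\big(1+(-1)^j\epsilon\big)\,I_{\mathrm{chain}}\big(M^{(j)},M^{(j+1)}\big).$$ Then $\min I^{(2n)}_{\mathrm{chain}}(\epsilon)=-4n(m-1)\max\{1,|\epsilon|\}$, the minimum being over all assignments of $\pm1$ values to all $M^{(j)}_k$.
   Context: For vectors $A=(A_0,\dots,A_{m-1})$, $B=(B_0,\dots,B_{m-1})\in\{\pm1\}^m$ the chained Bell expression is $I_{\mathrm{chain}}(A,B):=\sum_{i=0}^{m-1}\big(A_{m-i-2}B_i+A_{m-i-1}B_i\big)$, with the convention $A_{-1}:=-A_{m-1}$ (so for $m=2$ it is the CHSH expression $A_0B_0+A_0B_1+A_1B_0-A_1B_1$). In $I_{\mathrm{chain}}(M^{(j)},M^{(j+1)})$ party $j$ plays the role of $A$ and party $j+1$ the role of $B$. *)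

theory Defs
  imports Complex_Main
begin

definition Aidx :: "nat \<Rightarrow> (nat \<Rightarrow> real) \<Rightarrow> int \<Rightarrow> real" where
  "Aidx m A k = (if k = -1 then - A (m - 1) else A (nat k))"

definition I_chain :: "nat \<Rightarrow> (nat \<Rightarrow> real) \<Rightarrow> (nat \<Rightarrow> real) \<Rightarrow> real" where
  "I_chain m A B = (\<Sum>i<m. Aidx m A (int m - int i - 2) * B i
                          + Aidx m A (int m - int i - 1) * B i)"

definition I_chain_ring :: "nat \<Rightarrow> nat \<Rightarrow> real \<Rightarrow> (nat \<Rightarrow> nat \<Rightarrow> real) \<Rightarrow> real" where
  "I_chain_ring m n \<epsilon> M =
     (\<Sum>j<2*n. (1 + (-1)^j * \<epsilon>) * I_chain m (M j) (M ((j + 1) mod (2*n))))"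

definition pm1_assignment :: "nat \<Rightarrow> nat \<Rightarrow> (nat \<Rightarrow> nat \<Rightarrow> real) \<Rightarrow> bool" where
  "pm1_assignment m n M \<longleftrightarrow> (\<forall>j<2*n. \<forall>k<m. M j k \<in> {-1, 1})"

end

theory Submission
  imports Defs "HOL-Library.FuncSet"
begin

text \<open>Reading the first party backwards and appending A(-1) = -A(m-1) gives a sequence
  x(0), ..., x(m) with x(m) = -x(0), and I_chain(A,B) = \<Sum>i<m. (x(i+1) + x(i)) B(i).
  Every term is at most 2 in absolute value, and since x changes sign somewhere, some term
  vanishes; this gives |I_chain| \<le> 2(m-1). On the ring each of the 2n terms is then at least
  -2(m-1)|1 \<plusminus> \<epsilon>|, and summing |1+\<epsilon>| + |1-\<epsilon>| = 2 max 1 |\<epsilon>| over the n pairs gives the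
  bound. It is attained by constant vectors c(j) whose sign flips exactly across the bonds of
  nonnegative weight 1 + (-1)^j \<epsilon>, so that every term equals -2(m-1)|1 + (-1)^j \<epsilon>|. The
  weights depend only on the parity of j, so going once around the ring of 2n parties flips the
  sign an even number of times when n is even, and the pattern closes up.\<close>

definition chain_seq :: "nat \<Rightarrow> (nat \<Rightarrow> real) \<Rightarrow> nat \<Rightarrow> real" where
  "chain_seq m A i = Aidx m A (int m - 1 - int i)"

lemma I_chain_eq_chain_seq:
  "I_chain m A B = (\<Sum>i<m. (chain_seq m A (Suc i) + chain_seq m A i) * B i)"
  unfolding I_chain_def chain_seq_def by (rule sum.cong) (auto simp: algebra_simps)

lemma chain_seq_less: "i < m \<Longrightarrow> chain_seq m A i = A (m - 1 - i)"
  unfolding chain_seq_def Aidx_def by (auto simp: nat_diff_distrib)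

lemma chain_seq_last: "m \<ge> 1 \<Longrightarrow> chain_seq m A m = - chain_seq m A 0"
  by (simp add: chain_seq_def Aidx_def nat_diff_distrib')

lemma chain_seq_pm1:
  assumes "\<forall>k<m. A k \<in> {-1, 1}" and "i \<le> m" and "m \<ge> 1"
  shows "chain_seq m A i \<in> {-1, 1}"
proof (cases "i < m")
  case True
  then show ?thesis using assms(1) by (simp add: chain_seq_less)
next
  case False
  then have "i = m" using assms(2) by simp
  have "A (m - 1) \<in> {-1, 1}" using assms(1,3) by simp
  then show ?thesis
    using \<open>i = m\<close> chain_seq_last[OF assms(3)] chain_seq_less[of 0 m A] assms(3) by auto
qed

lemma exists_step_change:
  fixes x :: "nat \<Rightarrow> 'a"
  assumes "x m \<noteq> x 0"
  shows "\<exists>i<m. x (Suc i) \<noteq> x i"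
  using assms
proof (induction m)
  case (Suc m)
  then show ?case by (cases "x (Suc m) = x m") (auto intro: less_SucI)
qed simp

lemma abs_I_chain_le:
  assumes "m \<ge> 1" and A: "\<forall>k<m. A k \<in> {-1, 1}" and B: "\<forall>k<m. B k \<in> {-1, 1}"
  shows "\<bar>I_chain m A B\<bar> \<le> 2 * (real m - 1)"
proof -
  let ?x = "chain_seq m A"
  have x_pm1: "?x i \<in> {-1, 1}" if "i \<le> m" for i
    using chain_seq_pm1[OF A that \<open>m \<ge> 1\<close>] .
  have "?x m \<noteq> ?x 0"
    using chain_seq_last[OF \<open>m \<ge> 1\<close>, of A] x_pm1[of 0] by auto
  then obtain i0 where i0: "i0 < m" "?x (Suc i0) \<noteq> ?x i0"
    using exists_step_change by blast
  have step_zero: "?x (Suc i0) + ?x i0 = 0"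
    using i0 x_pm1[of i0] x_pm1[of "Suc i0"] by auto
  have step_le: "\<bar>?x (Suc i) + ?x i\<bar> \<le> 2" if "i < m" for i
    using that x_pm1[of i] x_pm1[of "Suc i"] by auto
  have "\<bar>I_chain m A B\<bar> \<le> (\<Sum>i<m. \<bar>(?x (Suc i) + ?x i) * B i\<bar>)"
    unfolding I_chain_eq_chain_seq by (rule sum_abs)
  also have "\<dots> = (\<Sum>i<m. \<bar>?x (Suc i) + ?x i\<bar>)"
    by (rule sum.cong) (use B in \<open>auto simp: abs_mult\<close>)
  also have "\<dots> = (\<Sum>i\<in>{..<m} - {i0}. \<bar>?x (Suc i) + ?x i\<bar>)"
    using i0 step_zero by (simp add: sum.remove)
  also have "\<dots> \<le> (\<Sum>i\<in>{..<m} - {i0}. 2)"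
    by (rule sum_mono) (use step_le in auto)
  also have "\<dots> = 2 * (real m - 1)"
    using i0 by (simp add: of_nat_diff)
  finally show ?thesis .
qed

lemma I_chain_const:
  assumes "m \<ge> 1"
  shows "I_chain m (\<lambda>_. a) (\<lambda>_. b) = 2 * (real m - 1) * a * b"
proof -
  obtain m' where m: "m = Suc m'" using assms by (cases m) auto
  have "I_chain m (\<lambda>_. a) (\<lambda>_. b) = (\<Sum>i<m'. 2 * a * b) + 0"
    unfolding I_chain_def m sum.lessThan_Suc
    by (rule arg_cong2[where f = "(+)"], rule sum.cong) (auto simp: Aidx_def)
  then show ?thesis using m by simp
qed

lemma I_chain_cong:
  assumes "\<forall>k<m. A k = A' k" and "\<forall>k<m. B k = B' k"
  shows "I_chain m A B = I_chain m A' B'"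
proof -
  have "Aidx m A k = Aidx m A' k" if "-1 \<le> k" "k < int m" "0 < m" for k
    unfolding Aidx_def using assms(1) that by (auto simp: nat_less_iff)
  then show ?thesis
    unfolding I_chain_def using assms(2) by (intro sum.cong) auto
qed

lemma I_chain_ring_cong:
  assumes "\<And>j k. j < 2 * n \<Longrightarrow> k < m \<Longrightarrow> M j k = M' j k"
  shows "I_chain_ring m n \<epsilon> M = I_chain_ring m n \<epsilon> M'"
  unfolding I_chain_ring_def
proof (rule sum.cong[OF refl])
  fix j assume "j \<in> {..<2 * n}"
  then have "j < 2 * n" "(j + 1) mod (2 * n) < 2 * n" by auto
  then show "(1 + (-1) ^ j * \<epsilon>) * I_chain m (M j) (M ((j + 1) mod (2 * n))) =
             (1 + (-1) ^ j * \<epsilon>) * I_chain m (M' j) (M' ((j + 1) mod (2 * n)))"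
    using assms by (simp add: I_chain_cong)
qed

lemma finite_I_chain_ring_values:
  "finite {I_chain_ring m n \<epsilon> M | M. pm1_assignment m n M}"
proof -
  let ?F = "PiE ({..<2 * n} \<times> {..<m}) (\<lambda>_. {-1, 1 :: real})"
  have "{I_chain_ring m n \<epsilon> M | M. pm1_assignment m n M}
          \<subseteq> (\<lambda>g. I_chain_ring m n \<epsilon> (curry g)) ` ?F"
  proof
    fix y assume "y \<in> {I_chain_ring m n \<epsilon> M | M. pm1_assignment m n M}"
    then obtain M where y: "y = I_chain_ring m n \<epsilon> M" and M: "pm1_assignment m n M"
      by auto
    define g where "g = (\<lambda>(j, k). if j < 2 * n \<and> k < m then M j k else undefined)"
    have "g \<in> ?F"
      using M unfolding g_def pm1_assignment_def PiE_def Pi_def extensional_def by auto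
    moreover have "y = I_chain_ring m n \<epsilon> (curry g)"
      unfolding y by (rule I_chain_ring_cong) (simp add: g_def)
    ultimately show "y \<in> (\<lambda>g. I_chain_ring m n \<epsilon> (curry g)) ` ?F" by blast
  qed
  moreover have "finite ?F" by (intro finite_PiE) auto
  ultimately show ?thesis by (meson finite_subset finite_imageI)
qed

lemma sum_alternating:
  "(\<Sum>j<2 * n. f ((-1 :: real) ^ j)) = real n * (f 1 + f (-1))"
  by (induction n) (auto simp: algebra_simps)

lemma sum_abs_ring_weights:
  "(\<Sum>j<2 * n. \<bar>1 + (-1) ^ j * \<epsilon>\<bar>) = 2 * real n * max 1 \<bar>\<epsilon>\<bar>"
proof -
  have "\<bar>1 + \<epsilon>\<bar> + \<bar>1 - \<epsilon>\<bar> = 2 * max 1 \<bar>\<epsilon>\<bar>"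
    by (simp add: max_def abs_if)
  then show ?thesis
    using sum_alternating[of "\<lambda>s. \<bar>1 + s * \<epsilon>\<bar>" n] by simp
qed

lemma I_chain_ring_lower_bound:
  assumes "m \<ge> 1" and M: "pm1_assignment m n M"
  shows "- 4 * real n * (real m - 1) * max 1 \<bar>\<epsilon>\<bar> \<le> I_chain_ring m n \<epsilon> M"
proof -
  have term_ge: "- (\<bar>w\<bar> * (2 * (real m - 1))) \<le> w * I_chain m (M j) (M ((j + 1) mod (2 * n)))"
    if "j < 2 * n" for j and w :: real
  proof -
    have "(j + 1) mod (2 * n) < 2 * n" using that by simp
    then have "\<bar>I_chain m (M j) (M ((j + 1) mod (2 * n)))\<bar> \<le> 2 * (real m - 1)"
      using abs_I_chain_le[OF \<open>m \<ge> 1\<close>] M that unfolding pm1_assignment_def by simp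
    then have "\<bar>w * I_chain m (M j) (M ((j + 1) mod (2 * n)))\<bar> \<le> \<bar>w\<bar> * (2 * (real m - 1))"
      by (simp add: abs_mult mult_left_mono)
    then show ?thesis by linarith
  qed
  have "(\<Sum>j<2 * n. - (\<bar>1 + (-1) ^ j * \<epsilon>\<bar> * (2 * (real m - 1)))) \<le> I_chain_ring m n \<epsilon> M"
    unfolding I_chain_ring_def by (rule sum_mono) (use term_ge in auto)
  then show ?thesis
    using sum_abs_ring_weights[where n = n and \<epsilon> = \<epsilon>]
    by (simp add: sum_negf flip: sum_distrib_right) (simp add: algebra_simps)
qed

primrec sign_walk :: "(nat \<Rightarrow> real) \<Rightarrow> nat \<Rightarrow> real" where
  "sign_walk w 0 = 1"
| "sign_walk w (Suc j) = (if w j \<ge> 0 then - sign_walk w j else sign_walk w j)"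

lemma sign_walk_pm1: "sign_walk w j \<in> {-1, 1}"
  by (induction j) auto

lemma weight_mult_sign_walk:
  "w j * (sign_walk w j * sign_walk w (Suc j)) = - \<bar>w j\<bar>"
  using sign_walk_pm1[of w j] by auto

lemma sign_walk_double:
  assumes "\<And>j. w (2 * j) = w 0" and "\<And>j. w (Suc (2 * j)) = w 1"
  shows "sign_walk w (2 * j) = sign_walk w 2 ^ j"
proof (induction j)
  case (Suc j)
  have "sign_walk w (2 * Suc j) = sign_walk w 2 * sign_walk w (2 * j)"
    using assms[of j] by (simp add: numeral_2_eq_2)
  then show ?case using Suc by simp
qed simp

lemma sign_walk_closes:
  assumes "\<And>j. w (2 * j) = w 0" and "\<And>j. w (Suc (2 * j)) = w 1" and "even n"
  shows "sign_walk w (2 * n) = 1"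
proof -
  obtain k where "n = 2 * k" using \<open>even n\<close> by blast
  moreover have "sign_walk w 2 ^ 2 = 1"
    using sign_walk_pm1[of w 2] by auto
  ultimately show ?thesis
    using sign_walk_double[OF assms(1,2), of n] by (simp add: power_mult)
qed

lemma I_chain_ring_sign_walk:
  fixes \<epsilon> :: real
  assumes "m \<ge> 1" and "even n"
  defines "w \<equiv> \<lambda>j. 1 + (-1) ^ j * \<epsilon>"
  shows "I_chain_ring m n \<epsilon> (\<lambda>j _. sign_walk w j) = - 4 * real n * (real m - 1) * max 1 \<bar>\<epsilon>\<bar>"
proof -
  have closes: "sign_walk w (2 * n) = sign_walk w 0"
    using sign_walk_closes[of w n] \<open>even n\<close> unfolding w_def by simp
  have "sign_walk w ((j + 1) mod (2 * n)) = sign_walk w (Suc j)" if "j < 2 * n" for j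
  proof (cases "j + 1 < 2 * n")
    case False
    then have "j + 1 = 2 * n" using that by simp
    then show ?thesis using closes by simp
  qed simp
  then have "I_chain_ring m n \<epsilon> (\<lambda>j _. sign_walk w j)
               = (\<Sum>j<2 * n. 2 * (real m - 1) * (w j * (sign_walk w j * sign_walk w (Suc j))))"
    unfolding I_chain_ring_def I_chain_const[OF \<open>m \<ge> 1\<close>] w_def
    by (intro sum.cong) (simp_all add: mult_ac)
  also have "\<dots> = - (2 * (real m - 1) * (\<Sum>j<2 * n. \<bar>w j\<bar>))"
    by (simp only: weight_mult_sign_walk sum_distrib_left sum_negf mult_minus_right)
  finally show ?thesis
    using sum_abs_ring_weights[where n = n and \<epsilon> = \<epsilon>] unfolding w_def by simp
qed

theorem mainTheorem9:
  fixes m n :: nat and \<epsilon> :: real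
  assumes "m \<ge> 2" and "n \<ge> 2" and "even n"
  shows "Min {I_chain_ring m n \<epsilon> M | M. pm1_assignment m n M}
           = - 4 * real n * (real m - 1) * max 1 \<bar>\<epsilon>\<bar>"
proof (rule Min_eqI[OF finite_I_chain_ring_values])
  have "m \<ge> 1" using assms(1) by simp
  show "- 4 * real n * (real m - 1) * max 1 \<bar>\<epsilon>\<bar> \<le> y"
    if "y \<in> {I_chain_ring m n \<epsilon> M | M. pm1_assignment m n M}" for y
    using that I_chain_ring_lower_bound[OF \<open>m \<ge> 1\<close>] by blast
  let ?M = "\<lambda>j (_ :: nat). sign_walk (\<lambda>j. 1 + (-1) ^ j * \<epsilon>) j"
  have "pm1_assignment m n ?M"
    unfolding pm1_assignment_def using sign_walk_pm1 by blast
  then show "- 4 * real n * (real m - 1) * max 1 \<bar>\<epsilon>\<bar>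
               \<in> {I_chain_ring m n \<epsilon> M | M. pm1_assignment m n M}"
    using I_chain_ring_sign_walk[OF \<open>m \<ge> 1\<close> \<open>even n\<close>, of \<epsilon>] by (auto intro!: exI[of _ ?M])
qed

end
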